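(* Let $i\ge 1$ be an integer, let $\alpha,\beta$ be real numbers with $i-1<\alpha<i$ and $i-1<\beta<i$, let $0\le\mu\le 1$, let $m\ge 0$ with $m+\mu(\alpha-\beta)\ge 0$, and let $\lambda\in\mathbb{C}$. Consider the equation \[ D_{0y}^{(\alpha,\beta)\mu}u(y)=\lambda y^{m}u(y),\qquad y>0. \] Put $\gamma=\beta+\mu(\alpha-\beta)$ (so $\gamma>0$), $a=m+\alpha\mu+\beta(1-\mu)$, and for $s=0,1,\dots,i-1$ put $b_s=s-(1-\mu)(i-\beta)$. Then the $i$ functions \[ u_s(y)=y^{b_s}\,E_{\gamma,\frac{a}{\gamma},\frac{a+b_s}{\gamma}-1}\bigl(\lambda y^{a}\bigr),\qquad s=0,1,\dots,i-1, \] that is, \[ u_s(y)=y^{s-(1-\mu)(i-\beta)}\sum_{k=0}^{\infty}c_k^{(s)}\bigl(\lambda y^{m+\alpha\mu+\beta(1-\mu)}\bigr)^k,\quad c_0^{(s)}=1,\quad c_k^{(s)}=\prod_{j=0}^{k-1}\frac{\Gamma\bigl(a(j+1)+b_s-\gamma+1\bigr)}{\Gamma\bigl(a(j+1)+b_s+1\bigr)}\ (k\ge1), \] are linearly independent solutions of this equation on $y>0$.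
   Context: For $\nu>0$, $I_{0y}^{\nu}g(y)=\frac{1}{\Gamma(\nu)}\int_0^y \frac{g(t)\,dt}{(y-t)^{1-\nu}}$ is the Riemann–Liouville fractional integral. The generalized Hilfer derivative is defined by \[ D_{0y}^{(\alpha,\beta)\mu}=I_{0y}^{\mu(i-\alpha)}\frac{d^{i}}{dy^{i}}I_{0y}^{(1-\mu)(i-\beta)}, \] where $i-1<\alpha,\beta<i$ and $0\le\mu\le1$ (with $I^0$ the identity). The Kilbas–Saigo function is \[ E_{\rho,n,l}(z)=\sum_{k=0}^{\infty}c_k z^k,\quad c_0=1,\quad c_k=\prod_{j=0}^{k-1}\frac{\Gamma(\rho(jn+l)+1)}{\Gamma(\rho(jn+l+1)+1)},\ k\ge1. \] *)

theory Defs
  imports "HOL-Analysis.Analysis"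
begin

definition frac_int :: "real \<Rightarrow> (real \<Rightarrow> complex) \<Rightarrow> real \<Rightarrow> complex" where
  "frac_int \<nu> g y =
     (if \<nu> = 0 then g y
      else integral {0..y} (\<lambda>t. complex_of_real ((y - t) powr (\<nu> - 1)) * g t)
             / complex_of_real (Gamma \<nu>))"

definition frac_int_exists :: "real \<Rightarrow> (real \<Rightarrow> complex) \<Rightarrow> real \<Rightarrow> bool" where
  "frac_int_exists \<nu> g y \<longleftrightarrow>
     (\<nu> = 0 \<or> (\<lambda>t. complex_of_real ((y - t) powr (\<nu> - 1)) * g t) integrable_on {0..y})"

fun hderiv :: "nat \<Rightarrow> (real \<Rightarrow> complex) \<Rightarrow> real \<Rightarrow> complex" where
  "hderiv 0 f = f"
| "hderiv (Suc n) f = (\<lambda>x. vector_derivative (hderiv n f) (at x))"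

text \<open>u solves  D_{0y}^{(alpha,beta)mu} u(y) = lambda y^m u(y)  for y > 0, where
  D = I^{mu(i-alpha)} d^i/dy^i I^{(1-mu)(i-beta)}; all integrals and derivatives are
  required to exist.\<close>
definition hilfer_solution ::
  "nat \<Rightarrow> real \<Rightarrow> real \<Rightarrow> real \<Rightarrow> real \<Rightarrow> complex \<Rightarrow> (real \<Rightarrow> complex) \<Rightarrow> bool" where
  "hilfer_solution i \<alpha> \<beta> \<mu> m lam u \<longleftrightarrow>
     (let p = (1 - \<mu>) * (real i - \<beta>); q = \<mu> * (real i - \<alpha>); v = frac_int p u in
       (\<forall>y>0. frac_int_exists p u y) \<and>
       (\<forall>k<i. \<forall>y>0. (hderiv k v has_vector_derivative hderiv (Suc k) v y) (at y)) \<and>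
       (\<forall>y>0. frac_int_exists q (hderiv i v) y) \<and>
       (\<forall>y>0. frac_int q (hderiv i v) y = lam * complex_of_real (y powr m) * u y))"

definition ks_coeff :: "real \<Rightarrow> real \<Rightarrow> real \<Rightarrow> nat \<Rightarrow> real" where
  "ks_coeff \<rho> n l k =
     (\<Prod>j<k. Gamma (\<rho> * (real j * n + l) + 1) / Gamma (\<rho> * (real j * n + l + 1) + 1))"

definition kilbas_saigo :: "real \<Rightarrow> real \<Rightarrow> real \<Rightarrow> complex \<Rightarrow> complex" where
  "kilbas_saigo \<rho> n l z = (\<Sum>k. complex_of_real (ks_coeff \<rho> n l k) * z ^ k)"

definition hilfer_u ::
  "nat \<Rightarrow> real \<Rightarrow> real \<Rightarrow> real \<Rightarrow> real \<Rightarrow> complex \<Rightarrow> nat \<Rightarrow> real \<Rightarrow> complex" where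
  "hilfer_u i \<alpha> \<beta> \<mu> m lam s y =
     (let \<gamma> = \<beta> + \<mu> * (\<alpha> - \<beta>);
          a = m + \<alpha> * \<mu> + \<beta> * (1 - \<mu>);
          b = real s - (1 - \<mu>) * (real i - \<beta>)
      in complex_of_real (y powr b) *
         kilbas_saigo \<gamma> (a / \<gamma>) ((a + b) / \<gamma> - 1) (lam * complex_of_real (y powr a)))"

end

theory Submission
  imports Defs "HOL-Real_Asymp.Real_Asymp"
begin

text \<open>
  Each u_s is a generalized power series y^b_s * sum_k c_k lam^k y^(k a) whose coefficient
  sequence has infinite radius of convergence, so the three operators of the Hilfer derivative
  act term by term: the Riemann-Liouville integral of order nu multiplies the coefficient of y^x
  by Gamma(x + 1) / Gamma(x + nu + 1) (Euler's Beta integral plus dominated convergence), and the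
  i-th derivative multiplies it by Gamma(x + 1) / Gamma(x - i + 1). On the term y^x with
  x = b_s + (k + 1) a these multipliers telescope to Gamma(x + 1) / Gamma(x + 1 - gamma), which the
  Kilbas-Saigo recurrence converts into the factor lam y^m in front of the k-th term, while the
  term k = 0 becomes y^s after the inner integral and is annihilated by the i derivatives because
  s < i. Linear independence follows by dividing by the smallest power y^b_s and letting y tend
  to 0.
\<close>

section \<open>Power series with infinite radius of convergence\<close>

lemma conv_radius_infinite_dominated:
  fixes d d' :: "nat \<Rightarrow> 'a :: {real_normed_field, banach}"
  assumes "conv_radius d = \<infinity>" and "\<And>k. norm (d' k) \<le> (A + B * real k) * norm (d k)"
  shows "conv_radius d' = \<infinity>"
proof (rule conv_radius_inftyI'')
  fix z :: 'a
  have "summable (\<lambda>k. norm (d k * (2 * z) ^ k))"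
    by (rule abs_summable_in_conv_radius) (simp add: assms(1))
  then have bound: "summable (\<lambda>k. (\<bar>A\<bar> + \<bar>B\<bar>) * (norm (d k) * (2 * norm z) ^ k))"
    by (intro summable_mult) (simp add: norm_mult norm_power)
  show "summable (\<lambda>k. d' k * z ^ k)"
  proof (rule summable_norm_cancel, rule summable_comparison_test[OF _ bound], intro exI allI impI)
    fix k :: nat
    have "real k \<le> 2 ^ k"
      by (metis less_exp less_imp_le of_nat_le_iff of_nat_numeral of_nat_power)
    then have "B * real k \<le> \<bar>B\<bar> * 2 ^ k"
      by (intro mult_mono) auto
    moreover have "A \<le> \<bar>A\<bar> * 2 ^ k"
      using mult_left_mono[OF one_le_power[of 2 k] abs_ge_zero[of A]] by linarith
    ultimately have "A + B * real k \<le> (\<bar>A\<bar> + \<bar>B\<bar>) * 2 ^ k"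
      by (simp add: distrib_right)
    then have "norm (d' k) \<le> (\<bar>A\<bar> + \<bar>B\<bar>) * 2 ^ k * norm (d k)"
      by (rule order.trans[OF assms(2) mult_right_mono]) simp
    then have "norm (d' k) * norm z ^ k \<le> (\<bar>A\<bar> + \<bar>B\<bar>) * 2 ^ k * norm (d k) * norm z ^ k"
      by (rule mult_right_mono) simp
    then show "norm (norm (d' k * z ^ k)) \<le> (\<bar>A\<bar> + \<bar>B\<bar>) * (norm (d k) * (2 * norm z) ^ k)"
      by (simp add: norm_mult norm_power power_mult_distrib mult_ac)
  qed
qed

lemma conv_radius_mult_linear:
  fixes d :: "nat \<Rightarrow> 'a :: {real_normed_field, banach}"
  assumes "conv_radius d = \<infinity>"
  shows "conv_radius (\<lambda>k. of_real (e + real k * a) * d k) = \<infinity>"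
proof (rule conv_radius_infinite_dominated[OF assms])
  fix k
  have "\<bar>e + real k * a\<bar> \<le> \<bar>e\<bar> + \<bar>a\<bar> * real k"
    using abs_triangle_ineq[of e "real k * a"] by (simp add: abs_mult mult.commute)
  then show "norm (of_real (e + real k * a) * d k) \<le> (\<bar>e\<bar> + \<bar>a\<bar> * real k) * norm (d k)"
    by (simp add: norm_mult mult_right_mono del: of_real_add of_real_mult)
qed

lemma conv_radius_ratio_tendsto_0:
  fixes C R :: "nat \<Rightarrow> 'a :: {real_normed_field, banach}"
  assumes "\<And>k. C (Suc k) = C k * R k" and "R \<longlonglongrightarrow> 0"
  shows "conv_radius C = \<infinity>"
proof (rule conv_radius_inftyI'')
  fix z :: 'a
  have "(\<lambda>k. R k * z) \<longlonglongrightarrow> 0"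
    using tendsto_mult_left_zero[OF assms(2)] by simp
  then obtain N where N: "\<And>k. k \<ge> N \<Longrightarrow> norm (R k * z) < 1/2"
    using LIMSEQ_D[of _ 0 "1/2"] by fastforce
  have ratio: "norm (C (Suc k) * z ^ Suc k) \<le> 1/2 * norm (C k * z ^ k)" if "k \<ge> N" for k
  proof -
    have "norm (C (Suc k) * z ^ Suc k) = norm (R k * z) * norm (C k * z ^ k)"
      by (simp add: assms(1) norm_mult mult_ac)
    also have "\<dots> \<le> 1/2 * norm (C k * z ^ k)"
      using N[OF that] by (intro mult_right_mono) auto
    finally show ?thesis .
  qed
  show "summable (\<lambda>k. C k * z ^ k)"
  proof (rule summable_ratio_test)
    show "1/2 < (1::real)" by simp
    show "norm (C (Suc k) * z ^ Suc k) \<le> 1/2 * norm (C k * z ^ k)" if "N \<le> k" for k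
      using ratio that .
  qed
qed

lemma sums_of_nat_mult_powser:
  fixes d :: "nat \<Rightarrow> 'a :: {real_normed_field, banach}"
  assumes "conv_radius d = \<infinity>"
  shows "(\<lambda>k. of_nat k * d k * z ^ k) sums (z * (\<Sum>k. diffs d k * z ^ k))"
proof -
  have "(\<lambda>k. diffs d k * z ^ k * z) sums ((\<Sum>k. diffs d k * z ^ k) * z)"
    using assms by (intro sums_mult2 summable_sums termdiff_converges_all summable_in_conv_radius) simp
  then have "(\<lambda>k. of_nat (Suc k) * d (Suc k) * z ^ Suc k) sums (z * (\<Sum>k. diffs d k * z ^ k))"
    by (simp add: diffs_def mult_ac)
  then show ?thesis
    by (subst (asm) sums_Suc_iff) simp
qed

lemma norm_partial_powser_le:
  fixes d :: "nat \<Rightarrow> complex"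
  assumes "conv_radius d = \<infinity>" "0 \<le> x" "x \<le> r"
  shows "norm (\<Sum>k<n. d k * of_real x ^ k) \<le> (\<Sum>k. norm (d k) * r ^ k)"
proof -
  have "summable (\<lambda>k. norm (d k) * r ^ k)"
    using abs_summable_in_conv_radius[of "of_real r" d] assms by (simp add: norm_mult norm_power)
  have "norm (\<Sum>k<n. d k * of_real x ^ k) \<le> (\<Sum>k<n. norm (d k) * r ^ k)"
    using assms(2,3) by (intro order.trans[OF norm_sum] sum_mono)
      (auto simp: norm_mult norm_power intro!: mult_left_mono power_mono)
  also have "\<dots> \<le> (\<Sum>k. norm (d k) * r ^ k)"
    by (rule sum_le_suminf) (use \<open>summable _\<close> assms(2,3) in auto)
  finally show ?thesis .
qed

lemma powser_tendsto_at_right_0: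
  fixes d :: "nat \<Rightarrow> complex"
  assumes "a > 0" "conv_radius d = \<infinity>"
  shows "((\<lambda>y. \<Sum>k. d k * of_real (y powr a) ^ k) \<longlongrightarrow> d 0) (at_right 0)"
proof -
  have "isCont (\<lambda>z. \<Sum>k. d k * z ^ k) 0"
    using assms(2) by (intro isCont_powser_converges_everywhere summable_in_conv_radius) simp
  moreover have "((\<lambda>y::real. complex_of_real (y powr a)) \<longlongrightarrow> 0) (at_right 0)"
    using assms(1) by (intro tendsto_of_real[where 'a=complex, of _ 0, simplified]) real_asymp
  ultimately show ?thesis
    using isCont_tendsto_compose by (fastforce simp: powser_zero)
qed

section \<open>Generalized power series\<close>

definition frac_powser :: "real \<Rightarrow> (nat \<Rightarrow> complex) \<Rightarrow> real \<Rightarrow> real \<Rightarrow> complex" where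
  "frac_powser a d e y = of_real (y powr e) * (\<Sum>k. d k * of_real (y powr a) ^ k)"

lemma powr_add_mult_power:
  fixes t :: real
  assumes "t \<ge> 0"
  shows "t powr (e + real k * a) = t powr e * (t powr a) ^ k"
  using assms by (cases "t = 0") (simp_all add: powr_add powr_power mult.commute)

lemma frac_powser_shift:
  assumes "conv_radius d = \<infinity>" "d 0 = 0"
  shows "frac_powser a d e y = frac_powser a (\<lambda>k. d (Suc k)) (e + a) y"
proof -
  define w where "w = complex_of_real (y powr a)"
  have "conv_radius (\<lambda>k. d (Suc k)) = \<infinity>"
    using conv_radius_shift[of d 1] assms(1) by simp
  then have "(\<lambda>k. d (Suc k) * w ^ k * w) sums ((\<Sum>k. d (Suc k) * w ^ k) * w)"
    by (intro sums_mult2 summable_sums summable_in_conv_radius) simp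
  then have "(\<lambda>k. d k * w ^ k) sums ((\<Sum>k. d (Suc k) * w ^ k) * w)"
    using sums_Suc_iff[of "\<lambda>k. d k * w ^ k"] assms(2) by (simp add: mult_ac)
  then show ?thesis
    unfolding frac_powser_def w_def[symmetric] by (simp add: sums_iff powr_add w_def mult_ac)
qed

lemma frac_powser_scale:
  assumes "conv_radius d = \<infinity>"
  shows "frac_powser a (\<lambda>k. c * d k) (e + m) y = c * of_real (y powr m) * frac_powser a d e y"
proof -
  have "(\<Sum>k. c * d k * of_real (y powr a) ^ k) = c * (\<Sum>k. d k * of_real (y powr a) ^ k)"
    using suminf_mult[OF summable_in_conv_radius[of "of_real (y powr a)" d], of c] assms
    by (simp add: mult_ac)
  then show ?thesis
    by (simp add: frac_powser_def powr_add mult_ac)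
qed

lemma has_vector_derivative_frac_powser:
  assumes "conv_radius d = \<infinity>" "y > 0"
  shows "(frac_powser a d e has_vector_derivative
            frac_powser a (\<lambda>k. of_real (e + real k * a) * d k) (e - 1) y) (at y)"
proof -
  define P where "P = (\<lambda>z. \<Sum>k. d k * z ^ k)"
  define P' where "P' = (\<lambda>z. \<Sum>k. diffs d k * z ^ k)"
  define w where "w = complex_of_real (y powr a)"
  have summable: "summable (\<lambda>k. d k * z ^ k)" for z
    using assms(1) by (intro summable_in_conv_radius) simp
  have P': "(P has_field_derivative P' w) (at w)"
    unfolding P_def P'_def by (rule termdiffs_strong_converges_everywhere[OF summable])
  have powr: "((\<lambda>y. complex_of_real (y powr x)) has_vector_derivative
                of_real (x * y powr (x - 1))) (at y)" for x
    by (rule has_vector_derivative_of_real, rule has_real_derivative_powr) (use assms(2) in auto)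
  have "((\<lambda>y. P (of_real (y powr a))) has_vector_derivative of_real (a * y powr (a - 1)) * P' w) (at y)"
    using field_vector_diff_chain_at[OF powr[of a] P'[unfolded w_def]] by (simp add: o_def w_def)
  then have deriv: "(frac_powser a d e has_vector_derivative
      of_real (y powr e) * (of_real (a * y powr (a - 1)) * P' w) + of_real (e * y powr (e - 1)) * P w) (at y)"
    using has_vector_derivative_mult[OF powr[of e]] by (simp add: frac_powser_def[abs_def] P_def w_def)
  have "(\<lambda>k. of_nat k * d k * w ^ k) sums (w * P' w)"
    unfolding P'_def by (rule sums_of_nat_mult_powser[OF assms(1)])
  then have "(\<lambda>k. of_real e * (d k * w ^ k) + of_real a * (of_nat k * d k * w ^ k)) sums
               (of_real e * P w + of_real a * (w * P' w))"
    unfolding P_def by (intro sums_add sums_mult summable_sums summable)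
  moreover have "of_real e * (d k * w ^ k) + of_real a * (of_nat k * d k * w ^ k) =
                   of_real (e + real k * a) * d k * w ^ k" for k
    by (simp add: algebra_simps)
  ultimately have series: "(\<Sum>k. of_real (e + real k * a) * d k * w ^ k) = of_real e * P w + of_real a * (w * P' w)"
    by (simp add: sums_iff)
  have "complex_of_real (y powr e) * of_real (y powr (a - 1)) = of_real (y powr (e - 1)) * w"
    by (simp add: w_def algebra_simps flip: of_real_mult powr_add)
  then have "of_real (y powr e) * (of_real (a * y powr (a - 1)) * P' w) + of_real (e * y powr (e - 1)) * P w
      = of_real (y powr (e - 1)) * (of_real e * P w + of_real a * (w * P' w))"
    by (simp add: algebra_simps)
  with deriv series show ?thesis
    unfolding frac_powser_def w_def[symmetric] by simp
qed

lemma has_vector_derivative_eq_frac_powser: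
  assumes "conv_radius d = \<infinity>" "\<And>t. t > 0 \<Longrightarrow> f t = frac_powser a d e t" "y > 0"
  shows "(f has_vector_derivative frac_powser a (\<lambda>k. of_real (e + real k * a) * d k) (e - 1) y) (at y)"
  using assms
  by (intro has_vector_derivative_transform_within_open[OF has_vector_derivative_frac_powser, where S = "{0<..}"])
     auto

definition hderiv_coeffs :: "real \<Rightarrow> (nat \<Rightarrow> complex) \<Rightarrow> real \<Rightarrow> nat \<Rightarrow> nat \<Rightarrow> complex" where
  "hderiv_coeffs a d e j k = of_real (\<Prod>l<j. e + real k * a - real l) * d k"

lemma hderiv_coeffs_Suc:
  "hderiv_coeffs a d e (Suc j) = (\<lambda>k. of_real (e - real j + real k * a) * hderiv_coeffs a d e j k)"
  by (simp add: hderiv_coeffs_def fun_eq_iff algebra_simps)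

lemma hderiv_coeffs_0_below:
  assumes "s < j"
  shows "hderiv_coeffs a d (real s) j 0 = 0"
  using assms by (simp add: hderiv_coeffs_def prod_zero_iff)

lemma hderiv_frac_powser:
  assumes "conv_radius d = \<infinity>" "\<And>t. t > 0 \<Longrightarrow> f t = frac_powser a d e t"
  shows "conv_radius (hderiv_coeffs a d e j) = \<infinity> \<and>
         (\<forall>y>0. hderiv j f y = frac_powser a (hderiv_coeffs a d e j) (e - real j) y)"
proof (induction j)
  case 0
  then show ?case using assms by (simp add: hderiv_coeffs_def)
next
  case (Suc j)
  then have IH: "conv_radius (hderiv_coeffs a d e j) = \<infinity>"
    "\<And>t. t > 0 \<Longrightarrow> hderiv j f t = frac_powser a (hderiv_coeffs a d e j) (e - real j) t"
    by auto
  have "e - real (Suc j) = e - real j - 1" by simp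
  then have "hderiv (Suc j) f y = frac_powser a (hderiv_coeffs a d e (Suc j)) (e - real (Suc j)) y"
    if "y > 0" for y
    using vector_derivative_at[OF has_vector_derivative_eq_frac_powser[OF IH that]]
    by (simp only: hderiv.simps hderiv_coeffs_Suc)
  moreover have "conv_radius (hderiv_coeffs a d e (Suc j)) = \<infinity>"
    unfolding hderiv_coeffs_Suc by (rule conv_radius_mult_linear[OF IH(1)])
  ultimately show ?case by blast
qed

lemma has_vector_derivative_hderiv_frac_powser:
  assumes "conv_radius d = \<infinity>" "\<And>t. t > 0 \<Longrightarrow> f t = frac_powser a d e t" "y > 0"
  shows "(hderiv j f has_vector_derivative hderiv (Suc j) f y) (at y)"
proof -
  have "(hderiv j f has_vector_derivative frac_powser a
          (\<lambda>k. of_real (e - real j + real k * a) * hderiv_coeffs a d e j k) (e - real j - 1) y) (at y)"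
    using hderiv_frac_powser[OF assms(1,2), of j] assms(3)
    by (intro has_vector_derivative_eq_frac_powser) auto
  moreover from this have "hderiv (Suc j) f y = frac_powser a
          (\<lambda>k. of_real (e - real j + real k * a) * hderiv_coeffs a d e j k) (e - real j - 1) y"
    by (simp only: hderiv.simps vector_derivative_at)
  ultimately show ?thesis by simp
qed

lemma frac_powser_sum_tendsto_lowest:
  fixes c :: "nat \<Rightarrow> complex"
  assumes "a > 0" "\<And>s. s < n \<Longrightarrow> conv_radius (D s) = \<infinity>" "s0 < n" "\<And>s. s < s0 \<Longrightarrow> c s = 0"
  shows "((\<lambda>y. of_real (y powr (p - real s0)) * (\<Sum>s<n. c s * frac_powser a (D s) (real s - p) y))
           \<longlongrightarrow> c s0 * D s0 0) (at_right 0)"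
proof -
  define P where "P s y = (\<Sum>k. D s k * of_real (y powr a) ^ k)" for s y
  define h where "h y = (\<Sum>s<n. c s * (of_real (y ^ (s - s0)) * P s y))" for y
  have "h y = of_real (y powr (p - real s0)) * (\<Sum>s<n. c s * frac_powser a (D s) (real s - p) y)"
    if "y > 0" for y
  proof -
    have "c s * frac_powser a (D s) (real s - p) y = of_real (y powr (real s0 - p)) * (c s * (of_real (y ^ (s - s0)) * P s y))"
      for s
    proof (cases "s < s0")
      case False
      then have "real s - p = (real s0 - p) + real (s - s0)"
        by (simp add: of_nat_diff)
      then have "y powr (real s - p) = y powr (real s0 - p) * y ^ (s - s0)"
        by (simp only: powr_add powr_realpow[OF that])
      then show ?thesis by (simp add: frac_powser_def P_def mult_ac)
    qed (simp add: assms(4))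
    then have "(\<Sum>s<n. c s * frac_powser a (D s) (real s - p) y) = of_real (y powr (real s0 - p)) * h y"
      unfolding h_def sum_distrib_left by (rule sum.cong[OF refl])
    moreover have "y powr (p - real s0) * y powr (real s0 - p) = 1"
      using that by (simp flip: powr_add)
    ultimately show ?thesis
      by (simp add: mult.assoc flip: of_real_mult)
  qed
  then have "eventually (\<lambda>y. h y = of_real (y powr (p - real s0)) *
                 (\<Sum>s<n. c s * frac_powser a (D s) (real s - p) y)) (at_right 0)"
    by (rule eventually_mono[OF eventually_at_right_less])
  moreover have "(h \<longlongrightarrow> (\<Sum>s<n. c s * (of_real (0 ^ (s - s0)) * D s 0))) (at_right 0)"
    unfolding h_def P_def
  proof (intro tendsto_sum tendsto_mult_left tendsto_mult)
    fix s assume "s \<in> {..<n}"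
    then show "((\<lambda>y. \<Sum>k. D s k * of_real (y powr a) ^ k) \<longlongrightarrow> D s 0) (at_right 0)"
      using assms(1,2) by (intro powser_tendsto_at_right_0) auto
    show "((\<lambda>y. complex_of_real (y ^ (s - s0))) \<longlongrightarrow> of_real (0 ^ (s - s0))) (at_right 0)"
      by (intro tendsto_of_real tendsto_power tendsto_ident_at)
  qed
  moreover have "(\<Sum>s<n. c s * (of_real (0 ^ (s - s0)) * D s 0)) = c s0 * D s0 0"
  proof -
    have "(\<Sum>s<n. c s * (of_real (0 ^ (s - s0)) * D s 0)) = (\<Sum>s<n. if s = s0 then c s0 * D s0 0 else 0)"
      using assms(4) by (intro sum.cong refl) (auto, meson linorder_neqE_nat)
    then show ?thesis using assms(3) by simp
  qed
  ultimately show ?thesis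
    using Lim_transform_eventually by fastforce
qed

lemma frac_powser_linear_independent:
  fixes c :: "nat \<Rightarrow> complex"
  assumes "a > 0" "\<And>s. s < n \<Longrightarrow> conv_radius (D s) = \<infinity>" "\<And>s. s < n \<Longrightarrow> D s 0 \<noteq> 0"
    and "\<And>y. y > 0 \<Longrightarrow> (\<Sum>s<n. c s * frac_powser a (D s) (real s - p) y) = 0"
  shows "\<forall>s<n. c s = 0"
proof (rule ccontr)
  assume "\<not> (\<forall>s<n. c s = 0)"
  define s0 where "s0 = (LEAST s. s < n \<and> c s \<noteq> 0)"
  have s0: "s0 < n" "c s0 \<noteq> 0"
    using LeastI_ex[of "\<lambda>s. s < n \<and> c s \<noteq> 0"] \<open>\<not> (\<forall>s<n. c s = 0)\<close> by (auto simp: s0_def)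
  have "c s = 0" if "s < s0" for s
    using not_less_Least[of s "\<lambda>s. s < n \<and> c s \<noteq> 0"] that s0 by (auto simp: s0_def)
  \<comment> \<open>after division by the lowest power y^(s0 - p) the vanishing sum tends to c s0 * D s0 0\<close>
  from frac_powser_sum_tendsto_lowest[OF assms(1,2) s0(1) this]
  have "((\<lambda>y. 0) \<longlongrightarrow> c s0 * D s0 0) (at_right (0::real))"
    by (rule Lim_transform_eventually) (auto intro: eventually_mono[OF eventually_at_right_less] assms(4))
  then have "c s0 * D s0 0 = 0"
    using tendsto_unique[OF trivial_limit_at_right_real _ tendsto_const] by blast
  then show False
    using s0 assms(3) by simp
qed

section \<open>Riemann-Liouville integrals of generalized power series\<close>

lemma has_integral_powr_kernel:
  fixes c \<nu> y :: real
  assumes "c > -1" "\<nu> > 0" "y > 0"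
  shows "((\<lambda>t. (y - t) powr (\<nu> - 1) * t powr c) has_integral
           Gamma \<nu> * (Gamma (c + 1) / Gamma (c + \<nu> + 1)) * y powr (c + \<nu>)) {0..y}"
proof -
  have "((\<lambda>t. t powr c * (1 - t) powr (\<nu> - 1)) has_integral Beta (c + 1) \<nu>) (cbox 0 1)"
    using has_integral_Beta_real[of "c + 1" \<nu>] assms by simp
  from has_integral_affinity'[OF this, of "1 / y" 0]
  have "((\<lambda>t. (t / y) powr c * (1 - t / y) powr (\<nu> - 1)) has_integral Beta (c + 1) \<nu> * y) {0..y}"
    using assms by (simp add: cbox_interval divide_inverse mult.commute)
  then have "((\<lambda>t. y powr (c + \<nu> - 1) * ((t / y) powr c * (1 - t / y) powr (\<nu> - 1))) has_integral
               y powr (c + \<nu> - 1) * (Beta (c + 1) \<nu> * y)) {0..y}"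
    by (rule has_integral_mult_right)
  moreover have "y powr (c + \<nu> - 1) * ((t / y) powr c * (1 - t / y) powr (\<nu> - 1)) =
                   (y - t) powr (\<nu> - 1) * t powr c" if "t \<in> {0..y}" for t
  proof -
    have "1 - t / y = (y - t) / y" using assms by (simp add: field_simps)
    then have "(t / y) powr c * (1 - t / y) powr (\<nu> - 1) =
                 t powr c * (y - t) powr (\<nu> - 1) / (y powr c * y powr (\<nu> - 1))"
      using that assms by (simp add: powr_divide)
    also have "y powr c * y powr (\<nu> - 1) = y powr (c + \<nu> - 1)"
      by (simp add: powr_add[symmetric] algebra_simps)
    finally show ?thesis using assms by simp
  qed
  moreover have "y powr (c + \<nu> - 1) * (Beta (c + 1) \<nu> * y) =
                   Gamma \<nu> * (Gamma (c + 1) / Gamma (c + \<nu> + 1)) * y powr (c + \<nu>)"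
    using assms by (simp add: powr_diff Beta_def add_ac mult_ac)
  ultimately show ?thesis
    by (metis (no_types, lifting) has_integral_cong)
qed

lemma has_integral_sums_dominated:
  fixes f :: "nat \<Rightarrow> 'n::euclidean_space \<Rightarrow> 'm::euclidean_space"
  assumes "\<And>k. (f k has_integral I k) S" "h integrable_on S"
    "\<And>n t. t \<in> S \<Longrightarrow> norm (\<Sum>k<n. f k t) \<le> h t"
    "\<And>t. t \<in> S \<Longrightarrow> (\<lambda>k. f k t) sums g t" "I sums J"
  shows "(g has_integral J) S"
  using assms
  by (intro has_integral_dominated_convergence[of "\<lambda>n t. \<Sum>k<n. f k t" "\<lambda>n. \<Sum>k<n. I k" S h g J])
     (auto simp: sums_def intro: has_integral_sum)

definition frac_int_coeffs :: "real \<Rightarrow> (nat \<Rightarrow> complex) \<Rightarrow> real \<Rightarrow> real \<Rightarrow> nat \<Rightarrow> complex" where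
  "frac_int_coeffs a d e \<nu> k =
     of_real (Gamma (e + real k * a + 1) / Gamma (e + real k * a + \<nu> + 1)) * d k"

lemma frac_int_coeffs_0:
  assumes "a \<ge> 0" "e > -1"
  shows "frac_int_coeffs a d e 0 = d"
proof
  fix k
  have "0 \<le> real k * a" using assms by simp
  then have "e + real k * a + 1 > 0" using assms by linarith
  then show "frac_int_coeffs a d e 0 k = d k"
    using Gamma_real_pos by (simp add: frac_int_coeffs_def less_imp_neq[symmetric])
qed

lemma conv_radius_frac_int_coeffs:
  assumes "a \<ge> 0" "conv_radius d = \<infinity>" "e > -1" "\<nu> \<ge> 0"
  shows "conv_radius (frac_int_coeffs a d e \<nu>) = \<infinity>"
proof (cases "\<nu> = 0")
  case True
  then show ?thesis using assms by (simp add: frac_int_coeffs_0)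
next
  case False
  then have "\<nu> > 0" using assms(4) by simp
  show ?thesis
  proof (rule conv_radius_infinite_dominated[OF assms(2), of _ "Beta (e + 1) \<nu> / Gamma \<nu>" 0])
    fix k
    define x where "x = e + real k * a + 1"
    have "0 \<le> real k * a" using assms by simp
    then have "x > 0" "e + 1 \<le> x" using assms(3) unfolding x_def by linarith+
    \<comment> \<open>the Gamma ratio is a Beta value, and Beta is decreasing in its first argument\<close>
    have "Gamma x / Gamma (x + \<nu>) = Beta x \<nu> / Gamma \<nu>"
      using \<open>x > 0\<close> \<open>\<nu> > 0\<close> by (simp add: Beta_def field_simps less_imp_neq[symmetric])
    moreover have "0 \<le> Beta x \<nu> / Gamma \<nu>"
      using \<open>x > 0\<close> \<open>\<nu> > 0\<close> by (simp add: Beta_def)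
    moreover have "Beta x \<nu> / Gamma \<nu> \<le> Beta (e + 1) \<nu> / Gamma \<nu>"
      using \<open>e + 1 \<le> x\<close> \<open>\<nu> > 0\<close> assms(3)
      by (intro divide_right_mono Beta_real_mono) auto
    ultimately have "\<bar>Gamma x / Gamma (x + \<nu>)\<bar> \<le> Beta (e + 1) \<nu> / Gamma \<nu>"
      by simp
    moreover have "norm (frac_int_coeffs a d e \<nu> k) = \<bar>Gamma x / Gamma (x + \<nu>)\<bar> * norm (d k)"
      unfolding frac_int_coeffs_def norm_mult norm_of_real x_def by (simp add: add_ac)
    ultimately have "norm (frac_int_coeffs a d e \<nu> k) \<le> Beta (e + 1) \<nu> / Gamma \<nu> * norm (d k)"
      by (simp only:) (rule mult_right_mono, simp_all)
    then show "norm (frac_int_coeffs a d e \<nu> k) \<le> (Beta (e + 1) \<nu> / Gamma \<nu> + 0 * real k) * norm (d k)"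
      by simp
  qed
qed

lemma has_integral_frac_powser_term:
  assumes "a \<ge> 0" "e > -1" "\<nu> > 0" "y > 0"
  shows "((\<lambda>t. of_real ((y - t) powr (\<nu> - 1) * t powr (e + real k * a)) * d k) has_integral
           of_real (Gamma \<nu> * y powr (e + \<nu>)) * (frac_int_coeffs a d e \<nu> k * of_real (y powr a) ^ k)) {0..y}"
proof -
  have "0 \<le> real k * a" using assms by simp
  then have "e + real k * a > -1" using assms by linarith
  from has_integral_powr_kernel[OF this assms(3,4)]
  have "((\<lambda>t. of_real ((y - t) powr (\<nu> - 1) * t powr (e + real k * a)) * d k) has_integral
           of_real (Gamma \<nu> * (Gamma (e + real k * a + 1) / Gamma (e + real k * a + \<nu> + 1)) *
           y powr (e + real k * a + \<nu>)) * d k) {0..y}"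
    by (intro has_integral_mult_left has_integral_of_real)
  moreover have "y powr (e + real k * a + \<nu>) = y powr (e + \<nu>) * (y powr a) ^ k"
    using powr_add_mult_power[of y "e + \<nu>" k a] assms(4) by (simp add: add_ac)
  ultimately show ?thesis
    by (simp add: frac_int_coeffs_def mult_ac)
qed

lemma has_integral_frac_powser:
  assumes "a \<ge> 0" "conv_radius d = \<infinity>" "e > -1" "\<nu> > 0" "y > 0"
  shows "((\<lambda>t. of_real ((y - t) powr (\<nu> - 1)) * frac_powser a d e t) has_integral
            of_real (Gamma \<nu>) * frac_powser a (frac_int_coeffs a d e \<nu>) (e + \<nu>) y) {0..y}"
proof -
  define K where "K t = (y - t) powr (\<nu> - 1) * t powr e" for t
  define M where "M = (\<Sum>k. norm (d k) * (y powr a) ^ k)"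
  have partial_sum: "(\<Sum>k<n. of_real ((y - t) powr (\<nu> - 1) * t powr (e + real k * a)) * d k) =
                       of_real (K t) * (\<Sum>k<n. d k * of_real (t powr a) ^ k)" if "t \<ge> 0" for n t
    unfolding sum_distrib_left K_def powr_add_mult_power[OF that] by (simp add: mult_ac)
  show ?thesis
  proof (rule has_integral_sums_dominated[where h = "\<lambda>t. M * K t"])
    fix k
    show "((\<lambda>t. of_real ((y - t) powr (\<nu> - 1) * t powr (e + real k * a)) * d k) has_integral
             of_real (Gamma \<nu> * y powr (e + \<nu>)) * (frac_int_coeffs a d e \<nu> k * of_real (y powr a) ^ k)) {0..y}"
      using assms(1,3-5) by (rule has_integral_frac_powser_term)
  next
    show "(\<lambda>t. M * K t) integrable_on {0..y}"
      using has_integral_powr_kernel[OF assms(3,4,5)]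
      by (intro integrable_on_mult_right) (auto simp: K_def integrable_on_def)
  next
    fix n t assume t: "t \<in> {0..y}"
    have "norm (\<Sum>k<n. of_real ((y - t) powr (\<nu> - 1) * t powr (e + real k * a)) * d k) =
            K t * norm (\<Sum>k<n. d k * of_real (t powr a) ^ k)"
      using t by (simp add: partial_sum norm_mult K_def del: of_real_mult)
    also have "\<dots> \<le> K t * M"
      unfolding M_def K_def using t assms(1,2)
      by (intro mult_left_mono norm_partial_powser_le powr_mono2) auto
    finally show "norm (\<Sum>k<n. of_real ((y - t) powr (\<nu> - 1) * t powr (e + real k * a)) * d k) \<le> M * K t"
      by (simp add: mult.commute)
  next
    fix t assume t: "t \<in> {0..y}"
    have "(\<lambda>k. d k * of_real (t powr a) ^ k) sums (\<Sum>k. d k * of_real (t powr a) ^ k)"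
      using assms(2) by (intro summable_sums summable_in_conv_radius) simp
    then have "(\<lambda>n. \<Sum>k<n. of_real ((y - t) powr (\<nu> - 1) * t powr (e + real k * a)) * d k) \<longlonglongrightarrow>
                 of_real (K t) * (\<Sum>k. d k * of_real (t powr a) ^ k)"
      unfolding sums_def partial_sum[of t, OF conjunct1[OF t[simplified]]] by (rule tendsto_mult_left)
    then show "(\<lambda>k. of_real ((y - t) powr (\<nu> - 1) * t powr (e + real k * a)) * d k) sums
                 (of_real ((y - t) powr (\<nu> - 1)) * frac_powser a d e t)"
      by (simp add: sums_def frac_powser_def K_def mult_ac)
  next
    have "(\<lambda>k. frac_int_coeffs a d e \<nu> k * of_real (y powr a) ^ k) sums
            (\<Sum>k. frac_int_coeffs a d e \<nu> k * of_real (y powr a) ^ k)"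
      using conv_radius_frac_int_coeffs[of a d e \<nu>] assms
      by (intro summable_sums summable_in_conv_radius) simp_all
    then show "(\<lambda>k. of_real (Gamma \<nu> * y powr (e + \<nu>)) * (frac_int_coeffs a d e \<nu> k * of_real (y powr a) ^ k))
                 sums (of_real (Gamma \<nu>) * frac_powser a (frac_int_coeffs a d e \<nu>) (e + \<nu>) y)"
      unfolding frac_powser_def of_real_mult mult.assoc by (intro sums_mult)
  qed
qed

lemma frac_int_frac_powser:
  assumes "a \<ge> 0" "conv_radius d = \<infinity>" "e > -1" "\<nu> \<ge> 0" "y > 0"
    and "\<And>t. t > 0 \<Longrightarrow> g t = frac_powser a d e t"
  shows "frac_int_exists \<nu> g y \<and> frac_int \<nu> g y = frac_powser a (frac_int_coeffs a d e \<nu>) (e + \<nu>) y"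
proof (cases "\<nu> = 0")
  case True
  then show ?thesis
    using assms by (simp add: frac_int_def frac_int_exists_def frac_int_coeffs_0)
next
  case False
  then have "\<nu> > 0" using assms(4) by simp
  \<comment> \<open>the hypothesis on g leaves its value at t = 0 open\<close>
  have "((\<lambda>t. of_real ((y - t) powr (\<nu> - 1)) * g t) has_integral
          of_real (Gamma \<nu>) * frac_powser a (frac_int_coeffs a d e \<nu>) (e + \<nu>) y) {0..y}"
    using assms(6)
    by (intro has_integral_spike[OF negligible_sing[of 0] _ has_integral_frac_powser[OF assms(1-3) \<open>\<nu> > 0\<close> assms(5)]])
       auto
  then show ?thesis
    using False Gamma_real_pos[OF \<open>\<nu> > 0\<close>] by (auto simp: frac_int_def frac_int_exists_def integrable_on_def integral_unique)
qed

section \<open>Gamma ratios and the Kilbas-Saigo coefficients\<close>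

lemma Gamma_ratio_le_powr:
  fixes x g :: real
  assumes "x > 1" "g > 0"
  shows "Gamma x / Gamma (x + g) \<le> (x - 1) powr (- g)"
proof -
  define f :: "real \<Rightarrow> real" where "f = ln \<circ> Gamma"
  define t :: real where "t = 1 / (1 + g)"
  have t: "0 < t" "t \<le> 1" using assms by (auto simp: t_def)
  have "(1 - t) * (x - 1) + t * (x + g) = x - 1 + t * (1 + g)"
    by (simp add: algebra_simps)
  also have "t * (1 + g) = 1"
    using assms by (simp add: t_def)
  finally have "(1 - t) *\<^sub>R (x - 1) + t *\<^sub>R (x + g) = x"
    by simp
  \<comment> \<open>log-convexity of Gamma at x, viewed as a convex combination of x - 1 and x + g\<close>
  then have convex: "f x \<le> (1 - t) * f (x - 1) + t * f (x + g)"
    unfolding f_def using convex_onD[OF log_convex_Gamma_real, of t "x - 1" "x + g"] assms t by simp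
  have "Gamma x = (x - 1) * Gamma (x - 1)"
    using Gamma_plus1[of "x - 1"] assms by (simp add: nonpos_Ints_def)
  then have "f x = f (x - 1) + ln (x - 1)"
    using assms by (simp add: f_def ln_mult_pos)
  with convex t have "f x - f (x + g) \<le> - ((1 - t) / t) * ln (x - 1)"
    by (simp add: field_simps)
  also have "(1 - t) / t = g" using assms by (simp add: t_def field_simps)
  finally have "ln (Gamma x) - ln (Gamma (x + g)) \<le> - g * ln (x - 1)"
    by (simp add: f_def)
  then have "exp (ln (Gamma x) - ln (Gamma (x + g))) \<le> exp (- g * ln (x - 1))"
    by simp
  then show ?thesis
    using assms by (simp add: exp_diff powr_def)
qed

lemma Gamma_ratio_tendsto_0:
  fixes A B g :: real
  assumes "A > 0" "g > 0"
  shows "(\<lambda>k. Gamma (real k * A + B) / Gamma (real k * A + B + g)) \<longlonglongrightarrow> 0"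
proof (rule tendsto_sandwich[of "\<lambda>_. 0" _ _ "\<lambda>k. (real k * A + B - 1) powr (- g)"])
  have lim: "filterlim (\<lambda>k. real k * A + B - 1) at_top sequentially"
    using assms(1) by real_asymp
  have ev: "eventually (\<lambda>k. real k * A + B - 1 > 0) sequentially"
    using assms(1) by real_asymp
  show "eventually (\<lambda>k. 0 \<le> Gamma (real k * A + B) / Gamma (real k * A + B + g)) sequentially"
    using ev by eventually_elim (use assms in \<open>auto intro!: divide_nonneg_pos less_imp_le\<close>)
  show "eventually (\<lambda>k. Gamma (real k * A + B) / Gamma (real k * A + B + g) \<le>
                        (real k * A + B - 1) powr (- g)) sequentially"
    using ev by eventually_elim (rule Gamma_ratio_le_powr, use assms in auto)
  show "(\<lambda>k. (real k * A + B - 1) powr (- g)) \<longlonglongrightarrow> 0"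
    using tendsto_neg_powr[OF _ lim] assms by simp
qed simp

lemma prod_diff_mult_Gamma:
  fixes x :: real
  assumes "x - real n + 1 > 0"
  shows "(\<Prod>l<n. x - real l) * Gamma (x - real n + 1) = Gamma (x + 1)"
  using assms
proof (induction n)
  case (Suc n)
  have "Gamma (x - real n + 1) = (x - real n) * Gamma (x - real n)"
    using Suc.prems by (intro Gamma_plus1) (auto elim!: nonpos_Ints_cases)
  then show ?case
    using Suc by (simp add: mult_ac)
qed simp

lemma ks_coeff_Suc:
  "ks_coeff \<rho> n l (Suc k) =
     ks_coeff \<rho> n l k * (Gamma (\<rho> * (real k * n + l) + 1) / Gamma (\<rho> * (real k * n + l + 1) + 1))"
  by (simp add: ks_coeff_def)

lemma conv_radius_ks_coeff:
  assumes "\<rho> > 0" "n > 0"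
  shows "conv_radius (\<lambda>k. complex_of_real (ks_coeff \<rho> n l k)) = \<infinity>"
proof (rule conv_radius_ratio_tendsto_0)
  define R where "R k = Gamma (real k * (\<rho> * n) + (\<rho> * l + 1)) / Gamma (real k * (\<rho> * n) + (\<rho> * l + 1) + \<rho>)"
    for k
  show "complex_of_real (ks_coeff \<rho> n l (Suc k)) = of_real (ks_coeff \<rho> n l k) * of_real (R k)" for k
    by (simp add: ks_coeff_Suc R_def algebra_simps)
  have "R \<longlonglongrightarrow> 0"
    unfolding R_def using assms by (intro Gamma_ratio_tendsto_0) auto
  then show "(\<lambda>k. complex_of_real (R k)) \<longlonglongrightarrow> 0"
    using tendsto_of_real by fastforce
qed

section \<open>The Hilfer equation\<close>

locale hilfer_parameters =
  fixes i :: nat and \<alpha> \<beta> \<mu> m :: real and lam :: complex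
  assumes i_ge_1: "i \<ge> 1"
    and alpha_bounds: "real i - 1 < \<alpha>" "\<alpha> < real i"
    and beta_bounds: "real i - 1 < \<beta>" "\<beta> < real i"
    and mu_bounds: "0 \<le> \<mu>" "\<mu> \<le> 1"
    and m_nonneg: "0 \<le> m"
begin

text \<open>p and q are the orders of the inner and outer fractional integrals of the Hilfer
  derivative, and b s is the exponent b_s.\<close>

definition \<gamma> :: real where "\<gamma> = \<beta> + \<mu> * (\<alpha> - \<beta>)"
definition a :: real where "a = m + \<alpha> * \<mu> + \<beta> * (1 - \<mu>)"
definition p :: real where "p = (1 - \<mu>) * (real i - \<beta>)"
definition q :: real where "q = \<mu> * (real i - \<alpha>)"
definition b :: "nat \<Rightarrow> real" where "b s = real s - p"

definition u_coeffs :: "nat \<Rightarrow> nat \<Rightarrow> complex" where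
  "u_coeffs s k = of_real (ks_coeff \<gamma> (a / \<gamma>) ((a + b s) / \<gamma> - 1) k) * lam ^ k"

lemma gamma_gt: "\<gamma> > real i - 1"
proof -
  have "\<gamma> = (1 - \<mu>) * \<beta> + \<mu> * \<alpha>" by (simp add: \<gamma>_def algebra_simps)
  moreover have "(1 - \<mu>) * (real i - 1) \<le> (1 - \<mu>) * \<beta>" "\<mu> * (real i - 1) \<le> \<mu> * \<alpha>"
    using alpha_bounds beta_bounds mu_bounds by (simp_all add: mult_left_mono)
  moreover have "(1 - \<mu>) * (real i - 1) < (1 - \<mu>) * \<beta> \<or> \<mu> * (real i - 1) < \<mu> * \<alpha>"
    using alpha_bounds beta_bounds mu_bounds by (cases "\<mu> = 0") simp_all
  ultimately show ?thesis by (auto simp: algebra_simps)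
qed

lemma gamma_pos: "\<gamma> > 0"
  using gamma_gt i_ge_1 by simp

lemma a_eq: "a = \<gamma> + m"
  by (simp add: a_def \<gamma>_def algebra_simps)

lemma a_gt: "a > real i - 1"
  using gamma_gt m_nonneg by (simp add: a_eq)

lemma a_pos: "a > 0"
  using gamma_pos m_nonneg by (simp add: a_eq)

lemma p_nonneg: "p \<ge> 0"
  using beta_bounds mu_bounds by (simp add: p_def)

lemma p_less_1: "p < 1"
proof -
  have "p \<le> real i - \<beta>"
    using beta_bounds mu_bounds mult_right_mono[of "1 - \<mu>" 1 "real i - \<beta>"] by (simp add: p_def)
  then show ?thesis using beta_bounds by simp
qed

lemma q_nonneg: "q \<ge> 0"
  using alpha_bounds mu_bounds by (simp add: q_def)

lemma p_plus_q: "p + q = real i - \<gamma>"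
  by (simp add: p_def q_def \<gamma>_def algebra_simps)

lemma b_gt: "b s > -1"
  using p_less_1 by (simp add: b_def)

lemma hilfer_u_eq: "hilfer_u i \<alpha> \<beta> \<mu> m lam s = frac_powser a (u_coeffs s) (b s)"
  by (simp add: fun_eq_iff hilfer_u_def Let_def kilbas_saigo_def frac_powser_def u_coeffs_def
      \<gamma>_def a_def b_def p_def power_mult_distrib mult_ac)

lemma conv_radius_u_coeffs: "conv_radius (u_coeffs s) = \<infinity>"
proof (rule conv_radius_inftyI'')
  fix z :: complex
  have "summable (\<lambda>k. of_real (ks_coeff \<gamma> (a / \<gamma>) ((a + b s) / \<gamma> - 1) k) * (lam * z) ^ k)"
    using conv_radius_ks_coeff[OF gamma_pos, of "a / \<gamma>"] a_pos gamma_pos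
    by (intro summable_in_conv_radius) simp_all
  then show "summable (\<lambda>k. u_coeffs s k * z ^ k)"
    by (simp add: u_coeffs_def power_mult_distrib mult_ac)
qed

lemma u_coeffs_0: "u_coeffs s 0 = 1"
  by (simp add: u_coeffs_def ks_coeff_def)

lemma u_coeffs_Suc:
  "u_coeffs s (Suc k) =
     of_real (Gamma (b s + real (Suc k) * a - \<gamma> + 1) / Gamma (b s + real (Suc k) * a + 1)) * lam * u_coeffs s k"
proof -
  have "\<gamma> * (real k * (a / \<gamma>) + ((a + b s) / \<gamma> - 1)) + 1 = b s + real (Suc k) * a - \<gamma> + 1"
       "\<gamma> * (real k * (a / \<gamma>) + ((a + b s) / \<gamma> - 1) + 1) + 1 = b s + real (Suc k) * a + 1"
    using gamma_pos by (simp_all add: field_simps)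
  then show ?thesis
    by (simp add: u_coeffs_def ks_coeff_Suc mult_ac)
qed


lemma hilfer_operator_u_coeffs:
  assumes "s < i"
  shows "frac_int_coeffs a (\<lambda>k. hderiv_coeffs a (frac_int_coeffs a (u_coeffs s) (b s) p) (real s) i (Suc k))
           (real s - real i + a) q = (\<lambda>k. lam * u_coeffs s k)"
proof
  fix k
  define x where "x = b s + real (Suc k) * a"
  have "0 \<le> real k * a" using a_pos by simp
  then have x_gt: "x + p - real i + 1 > 0" "x - \<gamma> + 1 > 0"
    using a_gt a_eq m_nonneg b_gt[of s] by (auto simp: x_def b_def algebra_simps)
  \<comment> \<open>I^p, d^i and I^q multiply the coefficient of y^x by Gamma(x+1)/Gamma(x+p+1),
    Gamma(x+p+1)/Gamma(x+p-i+1) and Gamma(x+p-i+1)/Gamma(x+1-gamma); the product telescopes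
    and is undone by the Kilbas-Saigo recurrence u_coeffs_Suc\<close>
  have "(\<Prod>l<i. x + p - real l) * Gamma (x + p - real i + 1) = Gamma (x + p + 1)"
    using x_gt by (intro prod_diff_mult_Gamma) simp
  moreover have "x + p - real i + q + 1 = x - \<gamma> + 1"
    using p_plus_q by linarith
  moreover have "Gamma (x + 1) > 0" "Gamma (x - \<gamma> + 1) > 0" "Gamma (x + p + 1) > 0"
    using x_gt p_nonneg gamma_pos by (auto intro!: Gamma_real_pos)
  ultimately have telescope:
    "Gamma (x + p - real i + 1) / Gamma (x + p - real i + q + 1) * (\<Prod>l<i. x + p - real l) *
       (Gamma (x + 1) / Gamma (x + p + 1)) * (Gamma (x - \<gamma> + 1) / Gamma (x + 1)) = 1"
    by (simp only:) (simp add: field_simps)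
  have "frac_int_coeffs a (\<lambda>k. hderiv_coeffs a (frac_int_coeffs a (u_coeffs s) (b s) p) (real s) i (Suc k))
          (real s - real i + a) q k =
        of_real (Gamma (x + p - real i + 1) / Gamma (x + p - real i + q + 1) * (\<Prod>l<i. x + p - real l) *
          (Gamma (x + 1) / Gamma (x + p + 1))) * u_coeffs s (Suc k)"
    by (simp add: frac_int_coeffs_def hderiv_coeffs_def x_def b_def algebra_simps)
  also have "\<dots> = of_real (Gamma (x + p - real i + 1) / Gamma (x + p - real i + q + 1) * (\<Prod>l<i. x + p - real l) *
          (Gamma (x + 1) / Gamma (x + p + 1)) * (Gamma (x - \<gamma> + 1) / Gamma (x + 1))) * (lam * u_coeffs s k)"
    unfolding u_coeffs_Suc x_def[symmetric] by (simp only: of_real_mult mult.assoc)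
  also have "\<dots> = lam * u_coeffs s k"
    by (simp only: telescope of_real_1 mult_1_left)
  finally show "frac_int_coeffs a (\<lambda>k. hderiv_coeffs a (frac_int_coeffs a (u_coeffs s) (b s) p) (real s) i (Suc k))
          (real s - real i + a) q k = lam * u_coeffs s k" .
qed

lemma hilfer_u_solution:
  assumes "s < i"
  shows "hilfer_solution i \<alpha> \<beta> \<mu> m lam (hilfer_u i \<alpha> \<beta> \<mu> m lam s)"
proof -
  define u where "u = hilfer_u i \<alpha> \<beta> \<mu> m lam s"
  define v where "v = frac_int p u"
  define D1 where "D1 = frac_int_coeffs a (u_coeffs s) (b s) p"
  define D2 where "D2 = hderiv_coeffs a D1 (real s) i"
  have u: "u t = frac_powser a (u_coeffs s) (b s) t" for t
    by (simp add: u_def hilfer_u_eq)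
  have v: "frac_int_exists p u y \<and> v y = frac_powser a D1 (real s) y" if "y > 0" for y
    using frac_int_frac_powser[OF less_imp_le[OF a_pos] conv_radius_u_coeffs b_gt p_nonneg that u]
    by (simp add: v_def D1_def b_def)
  have conv_D1: "conv_radius D1 = \<infinity>"
    unfolding D1_def using a_pos conv_radius_u_coeffs b_gt p_nonneg by (intro conv_radius_frac_int_coeffs) auto
  have "conv_radius D2 = \<infinity> \<and> (\<forall>y>0. hderiv i v y = frac_powser a D2 (real s - real i) y)"
    unfolding D2_def using v by (intro hderiv_frac_powser[OF conv_D1]) auto
  \<comment> \<open>the constant term of v is killed by i derivatives since s < i\<close>
  then have hderiv_v: "hderiv i v y = frac_powser a (\<lambda>k. D2 (Suc k)) (real s - real i + a) y" if "y > 0" for y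
    using that hderiv_coeffs_0_below[OF assms] frac_powser_shift by (simp add: D2_def)
  have "conv_radius (\<lambda>k. D2 (Suc k)) = \<infinity>"
    using \<open>conv_radius D2 = \<infinity> \<and> _\<close> conv_radius_shift[of D2 1] by simp
  moreover have "real s - real i + a > -1"
    using a_gt by simp
  ultimately have outer: "frac_int_exists q (hderiv i v) y \<and>
      frac_int q (hderiv i v) y = frac_powser a (\<lambda>k. lam * u_coeffs s k) (real s - real i + a + q) y"
    if "y > 0" for y
    using frac_int_frac_powser[OF less_imp_le[OF a_pos] _ _ q_nonneg that hderiv_v] hilfer_operator_u_coeffs[OF assms]
    by (simp add: D2_def D1_def)
  have "real s - real i + a + q = b s + m"
    using p_plus_q by (simp add: a_eq b_def algebra_simps)
  then have "frac_int q (hderiv i v) y = lam * of_real (y powr m) * u y" if "y > 0" for y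
    using outer[OF that] frac_powser_scale[OF conv_radius_u_coeffs] by (simp add: u)
  moreover have "(hderiv k v has_vector_derivative hderiv (Suc k) v y) (at y)" if "y > 0" for k y
    using v that by (intro has_vector_derivative_hderiv_frac_powser[OF conv_D1]) auto
  ultimately show ?thesis
    using v outer unfolding hilfer_solution_def Let_def
    by (simp add: p_def [symmetric] q_def [symmetric] u_def [symmetric] v_def [symmetric])
qed

lemma hilfer_u_linear_independent:
  assumes "\<forall>y>0. (\<Sum>s<i. c s * hilfer_u i \<alpha> \<beta> \<mu> m lam s y) = 0"
  shows "\<forall>s<i. c s = 0"
  using assms u_coeffs_0
  by (intro frac_powser_linear_independent[OF a_pos conv_radius_u_coeffs, of i _ c p])
     (auto simp: hilfer_u_eq b_def)

end

theorem mainTheorem1: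
  fixes i :: nat and \<alpha> \<beta> \<mu> m :: real and lam :: complex
  assumes "i \<ge> 1"
    and "real i - 1 < \<alpha>" "\<alpha> < real i"
    and "real i - 1 < \<beta>" "\<beta> < real i"
    and "0 \<le> \<mu>" "\<mu> \<le> 1"
    and "0 \<le> m" "m + \<mu> * (\<alpha> - \<beta>) \<ge> 0"
  shows "(\<forall>s<i. hilfer_solution i \<alpha> \<beta> \<mu> m lam (hilfer_u i \<alpha> \<beta> \<mu> m lam s)) \<and>
         (\<forall>c :: nat \<Rightarrow> complex.
            (\<forall>y>0. (\<Sum>s<i. c s * hilfer_u i \<alpha> \<beta> \<mu> m lam s y) = 0) \<longrightarrow> (\<forall>s<i. c s = 0))"
proof -
  interpret hilfer_parameters i \<alpha> \<beta> \<mu> m lam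
    using assms by unfold_locales auto
  show ?thesis
    using hilfer_u_solution hilfer_u_linear_independent by blast
qed

end
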